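(* Let $g\in\mathbb{F}_q[t]$ be a composite polynomial. Then $g$ is a Carmichael polynomial if and only if (1) $g$ is square-free, and (2) $\deg P$ divides $\deg g$ for every irreducible factor $P$ of $g$.
   Context: $\mathbb{F}_q$ is the finite field with $q$ elements. A composite polynomial is a nonzero, non-constant polynomial that is not irreducible. A finite ring $S$ is a Carmichael ring if $S$ is not a field and $a^{|S|}=a$ for every $a\in S$. A polynomial $g\in\mathbb{F}_q[t]$ is a Carmichael polynomial if $\mathbb{F}_q[t]/(g)$ is a Carmichael ring. *)

theory Defs
  imports "HOL-Computational_Algebra.Computational_Algebra" "HOL-Algebra.QuotRing"
begin

definition carmichael_ring :: "('b, 'c) ring_scheme \<Rightarrow> bool" where
  "carmichael_ring S \<longleftrightarrow> ring S \<and> finite (carrier S) \<and> \<not> Ring.field S \<and>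
     (\<forall>a \<in> carrier S. a [^]\<^bsub>S\<^esub> card (carrier S) = a)"

definition poly_ring :: "'a::field poly ring" where
  "poly_ring = \<lparr>carrier = UNIV, monoid.mult = (*), one = 1, zero = 0, add = (+)\<rparr>"

definition carmichael_poly :: "'a::{field,finite} poly \<Rightarrow> bool" where
  "carmichael_poly g \<longleftrightarrow> carmichael_ring (poly_ring Quot (PIdl\<^bsub>poly_ring\<^esub> g))"

end

theory Submission
  imports Defs "HOL-Algebra.Multiplicative_Group" "HOL-Library.Cardinality"
begin

text \<open>Let \<open>q = |F|\<close> and \<open>n = deg g\<close>. The ring \<open>F[t]/(g)\<close> has \<open>q^n\<close> elements, so \<open>g\<close> is
Carmichael iff \<open>g\<close> divides \<open>f^(q^n) - f\<close> for every \<open>f\<close>. This forces \<open>g\<close> to be squarefree,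
since a square factor \<open>x^2\<close> would divide \<open>x^(q^n) - x\<close> and hence \<open>x\<close>; conversely a squarefree
\<open>g\<close> divides a polynomial as soon as all its irreducible factors do. For irreducible \<open>P\<close> the
quotient \<open>F[t]/(P)\<close> is a field with \<open>q^(deg P)\<close> elements and cyclic unit group, so
\<open>P\<close> divides every \<open>f^(q^n) - f\<close> iff \<open>q^(deg P) - 1\<close> divides \<open>q^n - 1\<close>, i.e. iff
\<open>deg P\<close> divides \<open>n\<close>.\<close>

lemma power_minus_one_dvd_imp_dvd:
  fixes q :: nat
  assumes "q \<ge> 2" and "q ^ k - 1 dvd q ^ n - 1"
  shows "k dvd n"
  using assms(2)
proof (induction n rule: less_induct)
  case (less n)
  have pow_eq_1: "q ^ m = 1 \<longleftrightarrow> m = 0" for m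
    using assms(1) by (simp add: power_eq_1_iff)
  show ?case
  proof (cases "k \<le> n \<and> k > 0")
    case True
    define m where "m = n - k"
    have n: "n = m + k" using True by (simp add: m_def)
    have "q ^ n - 1 = q ^ m * (q ^ k - 1) + (q ^ m - 1)"
      using assms(1) by (simp add: n power_add diff_mult_distrib2)
    with less.prems have "q ^ k - 1 dvd q ^ m - 1"
      by (simp add: dvd_add_right_iff)
    with less.IH have "k dvd m" using True n by simp
    then show ?thesis by (simp add: n)
  next
    case False
    have "q ^ n - 1 < q ^ k - 1" if "n < k"
      using that assms(1) by (simp add: diff_less_mono power_strict_increasing)
    with False less.prems have "q ^ n - 1 = 0"
      by (cases "k = 0") (auto dest: dvd_imp_le)
    then have "n = 0"
      using pow_eq_1[of n] assms(1) by (simp add: Nat.le_eq_less_or_eq)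
    then show ?thesis by simp
  qed
qed

lemma card_UNIV_field_ge_2: "CARD('a::{field,finite}) \<ge> 2"
  using card_mono[of "UNIV :: 'a set" "{0, 1}"] by simp

lemma card_degree_less:
  assumes "n > 0"
  shows "card {f :: 'a::{zero,finite} poly. degree f < n} = CARD('a) ^ n"
proof -
  have "bij_betw Poly {xs :: 'a list. length xs = n} {f. degree f < n}"
  proof (rule bij_betwI')
    fix xs ys :: "'a list"
    assume "xs \<in> {xs. length xs = n}" "ys \<in> {xs. length xs = n}"
    then have len: "length xs = n" "length ys = n" by simp_all
    show "Poly xs = Poly ys \<longleftrightarrow> xs = ys"
    proof
      assume eq: "Poly xs = Poly ys"
      show "xs = ys"
      proof (rule nth_equalityI)
        show "length xs = length ys" using len by simp
        fix i assume "i < length xs"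
        then show "xs ! i = ys ! i"
          using arg_cong[OF eq, of "\<lambda>p. Polynomial.coeff p i"] len by (simp add: nth_default_nth)
      qed
    qed simp
  next
    fix xs :: "'a list"
    assume "xs \<in> {xs. length xs = n}"
    then have "degree (Poly xs) \<le> n - 1"
      by (intro degree_le) (auto simp: nth_default_def)
    with assms show "Poly xs \<in> {f. degree f < n}" by simp
  next
    fix f :: "'a poly"
    assume "f \<in> {f. degree f < n}"
    then have "f = Poly (map (Polynomial.coeff f) [0..<n])"
      by (intro poly_eqI) (auto simp: nth_default_def coeff_eq_0)
    then show "\<exists>xs\<in>{xs. length xs = n}. f = Poly xs" by force
  qed
  then have "card {f :: 'a poly. degree f < n} = card {xs :: 'a list. length xs = n}"
    by (simp add: bij_betw_same_card)
  also have "\<dots> = CARD('a) ^ n"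
    using card_lists_length_eq[of "UNIV :: 'a set" n] by simp
  finally show ?thesis .
qed

lemma dvd_power_power_minus_self:
  fixes p :: "'a::comm_ring_1"
  assumes "\<And>f. p dvd f ^ M - f"
  shows "p dvd f ^ (M ^ k) - f"
proof (induction k)
  case (Suc k)
  have "p dvd (f ^ M ^ k) ^ M - f ^ M ^ k + (f ^ M ^ k - f)"
    using assms Suc.IH by (rule dvd_add)
  moreover have "(f ^ M ^ k) ^ M = f ^ M ^ Suc k"
    by (simp only: power_Suc2 power_mult)
  ultimately show ?case by simp
qed simp

lemma squarefree_if_dvd_power_minus_self:
  fixes g :: "'a::idom"
  assumes "g \<noteq> 0" and "N \<ge> 2" and "\<And>f. g dvd f ^ N - f"
  shows "squarefree g"
proof (rule squarefreeI)
  fix x assume x2: "x ^ 2 dvd g"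
  then have "x \<noteq> 0" using assms(1) by auto
  have "x ^ 2 dvd x ^ N - (x ^ N - x)"
    using dvd_trans[OF x2 assms(3)] le_imp_power_dvd[OF assms(2)] by (rule dvd_diff[rotated])
  then have "x * x dvd x * 1" by (simp add: power2_eq_square)
  with \<open>x \<noteq> 0\<close> show "x dvd 1" by simp
qed

lemma irreducible_imp_degree_pos:
  fixes P :: "'a::field poly"
  assumes "irreducible P"
  shows "degree P > 0"
  using assms is_unit_iff_degree[of P] by (auto simp: irreducible_def)

lemma squarefree_dvd_if_irreducible_factors_dvd:
  fixes g X :: "'a::field poly"
  assumes "squarefree g" and "\<And>P. irreducible P \<Longrightarrow> P dvd g \<Longrightarrow> P dvd X"
  shows "g dvd X"
  using assms
proof (induction "degree g" arbitrary: g X rule: less_induct)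
  case less
  have "g \<noteq> 0" using less.prems(1) by auto
  then consider "is_unit g" | "irreducible g"
    | a b where "g = a * b" "\<not> is_unit a" "\<not> is_unit b"
    unfolding irreducible_def by blast
  then show ?case
  proof cases
    case 1
    then show ?thesis by (rule unit_imp_dvd)
  next
    case 2
    then show ?thesis by (rule less.prems(2)[OF _ dvd_refl])
  next
    case 3
    have "a \<noteq> 0" "b \<noteq> 0" using \<open>g \<noteq> 0\<close> 3 by auto
    then have deg_g: "degree g = degree a + degree b"
      unfolding \<open>g = a * b\<close> by (rule degree_mult_eq)
    have deg_a: "degree a > 0" and deg_b: "degree b > 0"
      using 3 \<open>a \<noteq> 0\<close> \<open>b \<noteq> 0\<close> by (simp_all add: is_unit_iff_degree)
    have sqf_a: "squarefree a" and sqf_b: "squarefree b"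
      using less.prems(1) squarefree_multD unfolding \<open>g = a * b\<close> by blast+
    have "a dvd X"
    proof (rule less.hyps[OF _ sqf_a])
      show "degree a < degree g" using deg_g deg_b by simp
      show "P dvd X" if "irreducible P" "P dvd a" for P
        using less.prems(2) that unfolding \<open>g = a * b\<close> by (meson dvd_mult2)
    qed
    then obtain Y where X: "X = a * Y" by blast
    have "b dvd Y"
    proof (rule less.hyps[OF _ sqf_b])
      show "degree b < degree g" using deg_g deg_a by simp
    next
      fix P assume irr: "irreducible P" and "P dvd b"
      have "\<not> P dvd a"
      proof
        assume "P dvd a"
        then have "P ^ 2 dvd g"
          unfolding \<open>g = a * b\<close> power2_eq_square using \<open>P dvd b\<close> by (rule mult_dvd_mono)
        with less.prems(1) irr show False by (auto dest: squarefreeD simp: irreducible_def)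
      qed
      moreover have "P dvd a * Y"
        using less.prems(2)[OF irr] \<open>P dvd b\<close> unfolding X \<open>g = a * b\<close> by (meson dvd_mult)
      ultimately show "P dvd Y"
        using prime_elem_dvd_multD[OF field_poly_irreducible_imp_prime[OF irr]] by blast
    qed
    then show ?thesis unfolding X \<open>g = a * b\<close> by (rule mult_dvd_mono[OF dvd_refl])
  qed
qed

lemma dvd_power_minus_self_iff:
  fixes g :: "'a::field poly"
  assumes "g \<noteq> 0" and "N \<ge> 2"
  shows "(\<forall>f. g dvd f ^ N - f) \<longleftrightarrow>
    squarefree g \<and> (\<forall>P. irreducible P \<and> P dvd g \<longrightarrow> (\<forall>f. P dvd f ^ N - f))"
proof (intro iffI conjI allI impI)
  assume dvd: "\<forall>f. g dvd f ^ N - f"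
  then show "squarefree g"
    using assms by (intro squarefree_if_dvd_power_minus_self) auto
  fix P f assume "irreducible P \<and> P dvd g"
  then have "P dvd g" by simp
  moreover have "g dvd f ^ N - f" using dvd by simp
  ultimately show "P dvd f ^ N - f" by (rule dvd_trans)
next
  fix f
  assume factors: "squarefree g \<and> (\<forall>P. irreducible P \<and> P dvd g \<longrightarrow> (\<forall>f. P dvd f ^ N - f))"
  show "g dvd f ^ N - f"
  proof (rule squarefree_dvd_if_irreducible_factors_dvd)
    show "squarefree g" using factors by simp
    show "P dvd f ^ N - f" if "irreducible P" "P dvd g" for P
      using factors that by simp
  qed
qed

lemma (in field) finite_field_pow_card:
  assumes fin: "finite (carrier R)" and a: "a \<in> carrier R"
  shows "a [^] card (carrier R) = a"
proof (cases "a = \<zero>")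
  case True
  have "card (carrier R) \<noteq> 0" using fin a by auto
  then show ?thesis using True by (simp add: nat_pow_zero)
next
  case False
  then have "a \<in> Units R" using a field_Units by simp
  moreover have "finite (Units R)" using fin field_Units by simp
  ultimately have "a [^] card (Units R) = \<one>" by (intro units_power_order_eq_one)
  moreover have "card (carrier R) = Suc (card (Units R))"
    using fin field_Units card.remove[OF fin zero_closed] by simp
  ultimately show ?thesis using a by simp
qed

lemma (in field) finite_field_card_minus_one_dvd:
  assumes fin: "finite (carrier R)" and "N \<ge> 1" and fixed: "\<And>a. a \<in> carrier R \<Longrightarrow> a [^] N = a"
  shows "card (carrier R) - 1 dvd N - 1"
proof -
  interpret G: group "mult_of R" by (rule field_mult_group)
  obtain a where a: "a \<in> carrier (mult_of R)"
    and gen: "carrier (mult_of R) = {a [^] i | i::nat. i \<in> UNIV}"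
    using finite_field_mult_group_has_gen[OF fin] by blast
  have fin': "finite (carrier (mult_of R))" using fin by simp
  have "a [^] (N - 1) \<otimes> a = \<one> \<otimes> a"
    using fixed[of a] a \<open>N \<ge> 1\<close> by (simp add: nat_pow_Suc[symmetric] del: nat_pow_Suc)
  then have "a [^] (N - 1) = \<one>"
    using a m_rcancel[of a "a [^] (N - 1)" \<one>] by simp
  then have "G.ord a dvd N - 1"
    using G.pow_eq_id[OF a] by (simp add: nat_pow_mult_of)
  moreover have "G.ord a = card (carrier (mult_of R))"
  proof -
    have "G.ord a \<noteq> 0" using G.ord_ge_1[OF fin' a] by simp
    then have "generate (mult_of R) {a} = carrier (mult_of R)"
      using G.generate_pow_nat[OF a] gen by (simp add: nat_pow_mult_of)
    then show ?thesis using G.generate_pow_card[OF a] by simp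
  qed
  moreover have "card (carrier (mult_of R)) = card (carrier R) - 1"
    using fin by (simp add: card_Diff_singleton)
  ultimately show ?thesis by simp
qed

lemma cring_poly_ring: "cring (poly_ring :: 'a::field poly ring)"
proof (rule cringI)
  show "abelian_group (poly_ring :: 'a poly ring)"
    by (rule abelian_groupI) (auto simp: poly_ring_def algebra_simps intro: exI[of _ "- _"])
  show "comm_monoid (poly_ring :: 'a poly ring)"
    by (rule comm_monoidI) (auto simp: poly_ring_def algebra_simps)
qed (simp add: poly_ring_def algebra_simps)

lemma carrier_poly_ring [simp]: "carrier poly_ring = UNIV"
  and mult_poly_ring [simp]: "x \<otimes>\<^bsub>poly_ring\<^esub> y = x * y"
  and one_poly_ring [simp]: "\<one>\<^bsub>poly_ring\<^esub> = 1"
  by (simp_all add: poly_ring_def)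

lemma PIdl_poly_ring: "PIdl\<^bsub>poly_ring\<^esub> g = {h. g dvd h}"
  by (auto simp: cgenideal_def dvd_def mult.commute)

lemma ideal_PIdl_poly_ring: "ideal (PIdl\<^bsub>poly_ring\<^esub> g) (poly_ring :: 'a::field poly ring)"
  by (rule cring.cgenideal_ideal[OF cring_poly_ring]) simp

definition poly_residue :: "'a::field poly \<Rightarrow> 'a poly \<Rightarrow> 'a poly set" where
  "poly_residue g f = {h. g dvd h - f}"

lemma a_r_coset_poly_ring: "PIdl\<^bsub>poly_ring\<^esub> g +>\<^bsub>poly_ring\<^esub> f = poly_residue g f"
  unfolding PIdl_poly_ring a_r_coset_def r_coset_def poly_residue_def
  by (auto simp: poly_ring_def intro!: bexI[of _ "_ - f"])

lemma poly_residue_eq_iff: "poly_residue g f = poly_residue g h \<longleftrightarrow> g dvd f - h"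
proof
  assume "poly_residue g f = poly_residue g h"
  then have "f \<in> poly_residue g h" by (auto simp: poly_residue_def)
  then show "g dvd f - h" by (simp add: poly_residue_def)
next
  assume fh: "g dvd f - h"
  have "g dvd x - f \<longleftrightarrow> g dvd x - h" for x
    using dvd_add_left_iff[OF fh, of "x - f"] by simp
  then show "poly_residue g f = poly_residue g h"
    unfolding poly_residue_def by simp
qed

abbreviation poly_quot :: "'a::field poly \<Rightarrow> 'a poly set ring" where
  "poly_quot g \<equiv> poly_ring Quot PIdl\<^bsub>poly_ring\<^esub> g"

lemma cring_poly_quot: "cring (poly_quot g)"
  by (rule ideal.quotient_is_cring[OF ideal_PIdl_poly_ring cring_poly_ring])

lemma carrier_poly_quot: "carrier (poly_quot g) = range (poly_residue g)"
  by (auto simp: FactRing_def A_RCOSETS_def' a_r_coset_poly_ring)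

lemma mult_poly_quot:
  "poly_residue g f \<otimes>\<^bsub>poly_quot g\<^esub> poly_residue g h = poly_residue g (f * h)"
  using ideal.rcoset_mult_add[OF ideal_PIdl_poly_ring, of f h g]
  by (simp add: FactRing_def a_r_coset_poly_ring)

lemma one_poly_quot: "\<one>\<^bsub>poly_quot g\<^esub> = poly_residue g 1"
  using a_r_coset_poly_ring[of g 1] by (simp add: FactRing_def)

lemma zero_poly_quot: "\<zero>\<^bsub>poly_quot g\<^esub> = poly_residue g 0"
  by (simp add: FactRing_def poly_residue_def PIdl_poly_ring)

lemma pow_poly_quot: "poly_residue g f [^]\<^bsub>poly_quot g\<^esub> (n::nat) = poly_residue g (f ^ n)"
  by (induction n) (simp_all add: one_poly_quot mult_poly_quot mult.commute)

lemma poly_quot_pow_eq_self_iff: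
  "(\<forall>a \<in> carrier (poly_quot g). a [^]\<^bsub>poly_quot g\<^esub> N = a) \<longleftrightarrow> (\<forall>f. g dvd f ^ N - f)"
  by (simp add: carrier_poly_quot pow_poly_quot poly_residue_eq_iff)

lemma carrier_poly_quot_eq_image_degree_less:
  fixes g :: "'a::field poly"
  assumes "degree g > 0"
  shows "carrier (poly_quot g) = poly_residue g ` {f. degree f < degree g}"
proof -
  have "poly_residue g f = poly_residue g (f mod g)" for f
    by (simp add: poly_residue_eq_iff minus_mod_eq_mult_div)
  moreover have "degree (f mod g) < degree g" for f
    using assms by (cases "f mod g = 0") (auto intro: degree_mod_less')
  ultimately show ?thesis
    unfolding carrier_poly_quot by auto
qed

lemma inj_on_poly_residue_degree_less:
  fixes g :: "'a::field poly"
  shows "inj_on (poly_residue g) {f. degree f < degree g}"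
proof (rule inj_onI)
  fix f h assume "f \<in> {f. degree f < degree g}" "h \<in> {f. degree f < degree g}"
    and "poly_residue g f = poly_residue g h"
  then have "g dvd f - h" and "degree (f - h) < degree g"
    using degree_diff_le_max[of f h] by (auto simp: poly_residue_eq_iff)
  then show "f = h"
    by (cases "f - h = 0") (auto dest: dvd_imp_degree_le)
qed

lemma finite_carrier_poly_quot:
  fixes g :: "'a::{field,finite} poly"
  assumes "degree g > 0"
  shows "finite (carrier (poly_quot g))"
  unfolding carrier_poly_quot_eq_image_degree_less[OF assms]
  using card_degree_less[OF assms, where 'a='a]
  by (intro finite_imageI card_ge_0_finite) simp

lemma card_carrier_poly_quot:
  fixes g :: "'a::{field,finite} poly"
  assumes "degree g > 0"
  shows "card (carrier (poly_quot g)) = CARD('a) ^ degree g"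
  unfolding carrier_poly_quot_eq_image_degree_less[OF assms]
  by (simp add: card_image inj_on_poly_residue_degree_less card_degree_less assms)

lemma field_poly_quot:
  fixes P :: "'a::{field,finite} poly"
  assumes irr: "irreducible P"
  shows "field (poly_quot P)"
proof -
  interpret cring "poly_quot P" by (rule cring_poly_quot)
  have fin: "finite (carrier (poly_quot P))"
    using finite_carrier_poly_quot irreducible_imp_degree_pos irr by blast
  show ?thesis
  proof (rule field_intro2)
    show "\<zero>\<^bsub>poly_quot P\<^esub> \<noteq> \<one>\<^bsub>poly_quot P\<^esub>"
      using irr by (simp add: zero_poly_quot one_poly_quot poly_residue_eq_iff irreducible_def)
  next
    fix x assume x: "x \<in> carrier (poly_quot P) - {\<zero>\<^bsub>poly_quot P\<^esub>}"
    then obtain f where x_def: "x = poly_residue P f"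
      by (auto simp: carrier_poly_quot)
    with x have "\<not> P dvd f"
      by (simp add: zero_poly_quot poly_residue_eq_iff)
    have "inj_on (\<lambda>y. x \<otimes>\<^bsub>poly_quot P\<^esub> y) (carrier (poly_quot P))"
    proof (rule inj_onI)
      fix y z assume "y \<in> carrier (poly_quot P)" "z \<in> carrier (poly_quot P)"
        and eq: "x \<otimes>\<^bsub>poly_quot P\<^esub> y = x \<otimes>\<^bsub>poly_quot P\<^esub> z"
      then obtain h1 h2 where y: "y = poly_residue P h1" and z: "z = poly_residue P h2"
        by (auto simp: carrier_poly_quot)
      from eq have "P dvd f * h1 - f * h2"
        by (simp add: x_def y z mult_poly_quot poly_residue_eq_iff)
      then have "P dvd f * (h1 - h2)"
        by (simp add: right_diff_distrib)
      then have "P dvd h1 - h2"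
        using prime_elem_dvd_multD[OF field_poly_irreducible_imp_prime[OF irr]] \<open>\<not> P dvd f\<close>
        by blast
      then show "y = z" by (simp add: y z poly_residue_eq_iff)
    qed
    then have "(\<lambda>y. x \<otimes>\<^bsub>poly_quot P\<^esub> y) ` carrier (poly_quot P) = carrier (poly_quot P)"
      using x by (intro endo_inj_surj[OF fin]) auto
    then have "\<one>\<^bsub>poly_quot P\<^esub> \<in> (\<lambda>y. x \<otimes>\<^bsub>poly_quot P\<^esub> y) ` carrier (poly_quot P)"
      by simp
    then obtain y where y: "y \<in> carrier (poly_quot P)" and "x \<otimes>\<^bsub>poly_quot P\<^esub> y = \<one>\<^bsub>poly_quot P\<^esub>"
      by blast
    moreover have "x \<in> carrier (poly_quot P)" using x by simp
    ultimately show "x \<in> Units (poly_quot P)"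
      using y m_comm[of x y] unfolding Units_def by auto
  qed
qed

lemma not_field_poly_quot:
  fixes g :: "'a::field poly"
  assumes "degree g > 0" and "\<not> irreducible g"
  shows "\<not> field (poly_quot g)"
proof
  assume "field (poly_quot g)"
  then interpret field "poly_quot g" .
  have "g \<noteq> 0" using assms(1) by auto
  then have "\<not> is_unit g" using assms(1) by (simp add: is_unit_iff_degree)
  with assms(2) \<open>g \<noteq> 0\<close> obtain a b where g: "g = a * b" and "\<not> is_unit a" "\<not> is_unit b"
    unfolding irreducible_def by blast
  then have "a \<noteq> 0" "b \<noteq> 0" "degree a > 0" "degree b > 0"
    using \<open>g \<noteq> 0\<close> by (auto simp: is_unit_iff_degree)
  then have "\<not> g dvd a" "\<not> g dvd b"
    using dvd_imp_degree_le[of g a] dvd_imp_degree_le[of g b] by (auto simp: g degree_mult_eq)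
  moreover have "poly_residue g a = \<zero>\<^bsub>poly_quot g\<^esub> \<or> poly_residue g b = \<zero>\<^bsub>poly_quot g\<^esub>"
    by (rule integral) (simp_all add: carrier_poly_quot rangeI mult_poly_quot zero_poly_quot poly_residue_eq_iff g)
  ultimately show False
    by (simp add: zero_poly_quot poly_residue_eq_iff)
qed

lemma irreducible_dvd_power_minus_self:
  fixes P :: "'a::{field,finite} poly"
  assumes "irreducible P"
  shows "P dvd f ^ CARD('a) ^ degree P - f"
proof -
  have deg: "degree P > 0" using assms by (rule irreducible_imp_degree_pos)
  interpret field "poly_quot P" using assms by (rule field_poly_quot)
  have "\<forall>a \<in> carrier (poly_quot P). a [^]\<^bsub>poly_quot P\<^esub> card (carrier (poly_quot P)) = a"
    using finite_field_pow_card[OF finite_carrier_poly_quot[OF deg]] by blast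
  then show ?thesis
    unfolding card_carrier_poly_quot[OF deg] poly_quot_pow_eq_self_iff by blast
qed

lemma irreducible_dvd_power_minus_self_iff:
  fixes P :: "'a::{field,finite} poly"
  assumes irr: "irreducible P"
  shows "(\<forall>f. P dvd f ^ CARD('a) ^ n - f) \<longleftrightarrow> degree P dvd n"
proof
  have deg: "degree P > 0" using irr by (rule irreducible_imp_degree_pos)
  interpret field "poly_quot P" using irr by (rule field_poly_quot)
  assume "\<forall>f. P dvd f ^ CARD('a) ^ n - f"
  then have "card (carrier (poly_quot P)) - 1 dvd CARD('a) ^ n - 1"
    using finite_field_card_minus_one_dvd[OF finite_carrier_poly_quot[OF deg]]
    unfolding poly_quot_pow_eq_self_iff[symmetric] by (simp add: Suc_leI)
  then show "degree P dvd n"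
    using card_UNIV_field_ge_2 card_carrier_poly_quot[OF deg]
    by (auto intro: power_minus_one_dvd_imp_dvd)
next
  assume "degree P dvd n"
  then obtain k where "CARD('a) ^ n = (CARD('a) ^ degree P) ^ k"
    by (auto simp: power_mult)
  then show "\<forall>f. P dvd f ^ CARD('a) ^ n - f"
    using dvd_power_power_minus_self[OF irreducible_dvd_power_minus_self[OF irr]] by simp
qed

lemma carmichael_poly_iff_dvd_power_minus_self:
  fixes g :: "'a::{field,finite} poly"
  assumes "degree g > 0" and "\<not> irreducible g"
  shows "carmichael_poly g \<longleftrightarrow> (\<forall>f. g dvd f ^ CARD('a) ^ degree g - f)"
proof -
  have "ring (poly_quot g)" using cring_poly_quot by (rule cring.axioms(1))
  then show ?thesis
    using finite_carrier_poly_quot[OF assms(1)] not_field_poly_quot[OF assms]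
      card_carrier_poly_quot[OF assms(1)]
    by (simp add: carmichael_poly_def carmichael_ring_def poly_quot_pow_eq_self_iff)
qed

theorem theorem4p1:
  fixes g :: "'a::{field,finite} poly"
  assumes "g \<noteq> 0" and "degree g > 0" and "\<not> Factorial_Ring.irreducible g"
  shows "carmichael_poly g \<longleftrightarrow>
           (squarefree g \<and>
            (\<forall>P. Factorial_Ring.irreducible P \<and> P dvd g \<longrightarrow> degree P dvd degree g))"
proof -
  define N where "N = CARD('a) ^ degree g"
  have "CARD('a) ^ 1 \<le> N"
    unfolding N_def using assms(2) card_UNIV_field_ge_2 by (intro power_increasing) auto
  then have "N \<ge> 2" using card_UNIV_field_ge_2[where 'a='a] by simp
  have "carmichael_poly g \<longleftrightarrow> (\<forall>f. g dvd f ^ N - f)"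
    unfolding N_def using assms(2,3) by (rule carmichael_poly_iff_dvd_power_minus_self)
  also have "\<dots> \<longleftrightarrow> squarefree g \<and> (\<forall>P. irreducible P \<and> P dvd g \<longrightarrow> (\<forall>f. P dvd f ^ N - f))"
    using assms(1) \<open>N \<ge> 2\<close> by (rule dvd_power_minus_self_iff)
  also have "\<dots> \<longleftrightarrow> squarefree g \<and> (\<forall>P. irreducible P \<and> P dvd g \<longrightarrow> degree P dvd degree g)"
    by (auto simp: N_def irreducible_dvd_power_minus_self_iff)
  finally show ?thesis .
qed

end
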